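(* Let $\kappa\in\mathbb K$, let $(B_n)_{n\ge1}$ be Hochschild 1-cocycles of $H_R$, and let $X(g)=\sum_{n\ge0}x_ng^n\in H_R[[g]]$ be the unique solution of the combinatorial Dyson–Schwinger equation $X(g)=\mathbb 1+\sum_{n\ge1}g^nB_n\big(X(g)^{1+n\kappa}\big)$. Let $\mathcal A$ be a commutative unital algebra, $\Psi\colon H_R\to\mathcal A$ a character, $\psi\colon H_R\to\mathcal A$ an infinitesimal character and $\lambda\colon H_R\to\mathcal A$ linear. Then in $\mathcal A[[g]]$: $$(\Psi\star\lambda)\circ X(g)=\big[\Psi\circ X(g)\big]\cdot\sum_{n\ge0}\lambda(x_n)\Big(g\,[\Psi\circ X(g)]^{\kappa}\Big)^n,$$ $$(\psi\star\lambda)\circ X(g)=\big[\psi\circ X(g)\big]\cdot(1+\kappa g\partial_g)\big[\lambda\circ X(g)\big].$$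
   Context: $\mathbb K$ is a field of characteristic zero; $H_R$ is the Connes–Kreimer Hopf algebra of rooted trees (free commutative algebra on rooted trees, basis rooted forests, unit $\mathbb 1$, grading by number of nodes, $B_+$ grafting onto a new root, coproduct with $\Delta\circ B_+=B_+\otimes\mathbb 1+(\mathrm{id}\otimes B_+)\circ\Delta$, counit $\varepsilon$). A 1-cocycle is a linear $B\colon H_R\to H_R$ with $\Delta\circ B=(\mathrm{id}\otimes B)\circ\Delta+B\otimes\mathbb 1$. For $p\in\mathbb K$ and $Y\in H_R[[g]]$ (or $\mathcal A[[g]]$) with constant term $\mathbb 1$, $Y^p:=\sum_{k\ge0}\binom pk(Y-\mathbb 1)^k$. For linear $\chi\colon H_R\to\mathcal A$, $\chi\circ X(g):=\sum_n\chi(x_n)g^n$. A character is a unital algebra morphism; an infinitesimal character is a linear $\psi$ with $\psi(ab)=\psi(a)\varepsilon(b)+\varepsilon(a)\psi(b)$. Convolution $\alpha\star\beta=m_{\mathcal A}\circ(\alpha\otimes\beta)\circ\Delta$. *)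

theory Defs
  imports "HOL-Library.Poly_Mapping" "HOL-Library.Multiset" "HOL-Library.Product_Plus"
          "HOL-Computational_Algebra.Formal_Power_Series"
begin

text \<open>Unordered (non-planar) rooted trees: a tree is a root with a multiset of subtrees.
  A rooted forest is a multiset of rooted trees.\<close>
datatype rtree = Node "rtree multiset"

type_synonym forest = "rtree multiset"

text \<open>H_R over the field 'k: finitely supported functions on forests (basis = forests).
  The product is the convolution w.r.t. multiset union, i.e. disjoint union of forests,
  so this is the free commutative algebra on rooted trees; the unit is the empty forest.\<close>
type_synonym 'k HR = "forest \<Rightarrow>\<^sub>0 'k"

text \<open>H_R tensor H_R, with basis pairs of forests and the tensor-product algebra structure.\<close>
type_synonym 'k HR2 = "(forest \<times> forest) \<Rightarrow>\<^sub>0 'k"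

definition forest_basis :: "forest \<Rightarrow> 'k::comm_ring_1 HR" where
  "forest_basis F = Poly_Mapping.single F 1"

definition pm_smult :: "'k::comm_ring_1 \<Rightarrow> ('a \<Rightarrow>\<^sub>0 'k) \<Rightarrow> ('a \<Rightarrow>\<^sub>0 'k)" where
  "pm_smult c x = Poly_Mapping.map ((*) c) x"

definition tensor :: "'k::comm_ring_1 HR \<Rightarrow> 'k HR \<Rightarrow> 'k HR2" where
  "tensor x y = (\<Sum>a\<in>Poly_Mapping.keys x. \<Sum>b\<in>Poly_Mapping.keys y.
       Poly_Mapping.single (a, b) (Poly_Mapping.lookup x a * Poly_Mapping.lookup y b))"

text \<open>The grafting operator B_+ on forests, and (id \<otimes> B_+) on basis elements of HR2.\<close>
definition id_tensor_Bplus :: "'k::comm_ring_1 HR2 \<Rightarrow> 'k HR2" where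
  "id_tensor_Bplus t = (\<Sum>ab\<in>Poly_Mapping.keys t.
       Poly_Mapping.single (fst ab, {# Node (snd ab) #}) (Poly_Mapping.lookup t ab))"

text \<open>Coproduct on trees, defined recursively by
  Delta(B_+(F)) = B_+(F) \<otimes> 1 + (id \<otimes> B_+)(Delta F), with Delta multiplicative on forests.\<close>
primrec delta_tree :: "rtree \<Rightarrow> 'k::comm_ring_1 HR2" where
  "delta_tree (Node F) =
     Poly_Mapping.single ({# Node F #}, {#}) 1
     + id_tensor_Bplus (prod_mset (image_mset delta_tree F))"

definition delta_forest :: "forest \<Rightarrow> 'k::comm_ring_1 HR2" where
  "delta_forest F = prod_mset (image_mset delta_tree F)"

definition Delta :: "'k::comm_ring_1 HR \<Rightarrow> 'k HR2" where
  "Delta x = (\<Sum>F\<in>Poly_Mapping.keys x. pm_smult (Poly_Mapping.lookup x F) (delta_forest F))"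

definition counit :: "'k::comm_ring_1 HR \<Rightarrow> 'k" where
  "counit x = Poly_Mapping.lookup x {#}"

definition id_tensor :: "('k::comm_ring_1 HR \<Rightarrow> 'k HR) \<Rightarrow> 'k HR2 \<Rightarrow> 'k HR2" where
  "id_tensor B t = (\<Sum>ab\<in>Poly_Mapping.keys t.
       pm_smult (Poly_Mapping.lookup t ab) (tensor (forest_basis (fst ab)) (B (forest_basis (snd ab)))))"

definition HR_linear :: "('k::comm_ring_1 HR \<Rightarrow> 'k HR) \<Rightarrow> bool" where
  "HR_linear B \<longleftrightarrow> (\<forall>x y. B (x + y) = B x + B y) \<and> (\<forall>c x. B (pm_smult c x) = pm_smult c (B x))"

definition one_cocycle :: "('k::comm_ring_1 HR \<Rightarrow> 'k HR) \<Rightarrow> bool" where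
  "one_cocycle B \<longleftrightarrow> HR_linear B \<and>
     (\<forall>x. Delta (B x) = id_tensor B (Delta x) + tensor (B x) 1)"

text \<open>A commutative unital K-algebra A is given as a commutative ring 'a together with a
  unital ring homomorphism iota : K \<rightarrow> A (the structure map).\<close>
definition alg_struct :: "('k::field \<Rightarrow> 'a::comm_ring_1) \<Rightarrow> bool" where
  "alg_struct iota \<longleftrightarrow> iota 1 = 1 \<and> (\<forall>a b. iota (a + b) = iota a + iota b)
     \<and> (\<forall>a b. iota (a * b) = iota a * iota b)"

definition lin_map :: "('k::comm_ring_1 \<Rightarrow> 'a::comm_ring_1) \<Rightarrow> ('k HR \<Rightarrow> 'a) \<Rightarrow> bool" where
  "lin_map iota \<chi> \<longleftrightarrow> (\<forall>x y. \<chi> (x + y) = \<chi> x + \<chi> y)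
     \<and> (\<forall>c x. \<chi> (pm_smult c x) = iota c * \<chi> x)"

definition character :: "('k::comm_ring_1 \<Rightarrow> 'a::comm_ring_1) \<Rightarrow> ('k HR \<Rightarrow> 'a) \<Rightarrow> bool" where
  "character iota \<chi> \<longleftrightarrow> lin_map iota \<chi> \<and> \<chi> 1 = 1 \<and> (\<forall>x y. \<chi> (x * y) = \<chi> x * \<chi> y)"

definition inf_character :: "('k::comm_ring_1 \<Rightarrow> 'a::comm_ring_1) \<Rightarrow> ('k HR \<Rightarrow> 'a) \<Rightarrow> bool" where
  "inf_character iota \<psi> \<longleftrightarrow> lin_map iota \<psi> \<and>
     (\<forall>x y. \<psi> (x * y) = \<psi> x * iota (counit y) + iota (counit x) * \<psi> y)"

text \<open>Convolution alpha \<star> beta = m_A \<circ> (alpha \<otimes> beta) \<circ> Delta.\<close>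
definition conv :: "('k::comm_ring_1 \<Rightarrow> 'a::comm_ring_1) \<Rightarrow> ('k HR \<Rightarrow> 'a) \<Rightarrow> ('k HR \<Rightarrow> 'a) \<Rightarrow> 'k HR \<Rightarrow> 'a" where
  "conv iota \<alpha> \<beta> x = (\<Sum>ab\<in>Poly_Mapping.keys (Delta x).
       iota (Poly_Mapping.lookup (Delta x) ab) * \<alpha> (forest_basis (fst ab)) * \<beta> (forest_basis (snd ab)))"

text \<open>Y^p := sum over k of (p choose k) (Y - 1)^k for Y with constant term 1, p in K; scalars act
  through the structure map iota. Since (Y-1)^k has order \<ge> k, the coefficient of g^n
  only involves k \<le> n.\<close>
definition fps_gpow :: "('k::field_char_0 \<Rightarrow> 'a::comm_ring_1) \<Rightarrow> 'k \<Rightarrow> 'a fps \<Rightarrow> 'a fps" where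
  "fps_gpow iota p Y = Abs_fps (\<lambda>n. \<Sum>k\<le>n. iota (p gchoose k) * fps_nth ((Y - 1) ^ k) n)"

definition fps_comp :: "('b \<Rightarrow> 'a::comm_ring_1) \<Rightarrow> 'b fps \<Rightarrow> 'a fps" where
  "fps_comp \<chi> X = Abs_fps (\<lambda>n. \<chi> (fps_nth X n))"

text \<open>\<Sum>_{n\<ge>0} c_n Z^n for Z of order \<ge> 1 (coefficient of g^m needs only n \<le> m).\<close>
definition fps_subst_sum :: "(nat \<Rightarrow> 'a::comm_ring_1) \<Rightarrow> 'a fps \<Rightarrow> 'a fps" where
  "fps_subst_sum c Z = Abs_fps (\<lambda>m. \<Sum>n\<le>m. c n * fps_nth (Z ^ n) m)"

definition HR_scalar :: "'k::comm_ring_1 \<Rightarrow> 'k HR" where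
  "HR_scalar c = Poly_Mapping.single {#} c"

end

theory Submission
  imports Defs
begin

unbundle fps_syntax

text \<open>
  Writing
  \<open>K = X\<^sup>\<kappa>\<close>, one shows by strong induction on the degree, using the Dyson--Schwinger equation and
  the cocycle identity, that \<open>\<Delta> x\<^sub>N = \<Sum>\<^sub>k (X K\<^sup>k)\<^sub>N\<^sub>-\<^sub>k \<otimes> x\<^sub>k\<close>; as a series identity this reads
  \<open>\<Delta> X = (X \<otimes> 1) \<cdot> ((1 \<otimes> X) \<circ> g (K \<otimes> 1))\<close>. The induction step needs that the coproduct, the
  embeddings into the tensor square and substitution all commute with generalised powers.
  Evaluating \<open>\<alpha> \<otimes> \<beta>\<close> on this formula gives \<open>(\<alpha> \<star> \<beta>)(x\<^sub>N) = \<Sum>\<^sub>k \<alpha>((X K\<^sup>k)\<^sub>N\<^sub>-\<^sub>k) \<beta>(x\<^sub>k)\<close>. A character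
  commutes with generalised powers, which yields the first formula; an infinitesimal character
  vanishes on products of elements of the augmentation ideal, where the cocycles take their
  values, so \<open>\<psi>(X\<^sup>p) = p \<psi>(X)\<close>, which yields the second.
\<close>

definition rhom :: "('a::comm_ring_1 \<Rightarrow> 'b::comm_ring_1) \<Rightarrow> bool" where
  "rhom f \<longleftrightarrow> (\<forall>x y. f (x + y) = f x + f y) \<and> (\<forall>x y. f (x * y) = f x * f y) \<and> f 1 = 1"

lemma rhom_add: "rhom f \<Longrightarrow> f (x + y) = f x + f y"
  by (simp add: rhom_def)

lemma rhom_mult: "rhom f \<Longrightarrow> f (x * y) = f x * f y"
  by (simp add: rhom_def)

lemma rhom_one: "rhom f \<Longrightarrow> f 1 = 1"
  by (simp add: rhom_def)

lemma rhom_zero: "rhom f \<Longrightarrow> f 0 = 0"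
  using rhom_add[of f 0 0] by simp

lemma rhom_diff: "rhom f \<Longrightarrow> f (x - y) = f x - f y"
  using rhom_add[of f "x - y" y] by (simp add: algebra_simps)

lemma rhom_uminus: "rhom f \<Longrightarrow> f (- x) = - f x"
  using rhom_diff[of f 0 x] by (simp add: rhom_zero)

lemma rhom_sum: "rhom f \<Longrightarrow> f (sum g S) = (\<Sum>i\<in>S. f (g i))"
  by (induction S rule: infinite_finite_induct) (auto simp: rhom_zero rhom_add)

lemma rhom_power: "rhom f \<Longrightarrow> f (x ^ n) = f x ^ n"
  by (induction n) (auto simp: rhom_one rhom_mult)

lemma rhom_of_nat: "rhom f \<Longrightarrow> f (of_nat n) = of_nat n"
  by (induction n) (auto simp: rhom_zero rhom_one rhom_add)

lemma rhom_comp: "rhom f \<Longrightarrow> rhom g \<Longrightarrow> rhom (g \<circ> f)"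
  by (simp add: rhom_def)

lemma rhom_prod_mset: "rhom f \<Longrightarrow> f (prod_mset M) = prod_mset (image_mset f M)"
  by (induction M) (simp_all add: rhom_one rhom_mult)

text \<open>A ring receiving a homomorphism from a field of characteristic zero has no additive
  torsion; this is what lets us solve the linear ODEs for generalised powers.\<close>
lemma rhom_torsion_free:
  fixes s :: "'k::field_char_0 \<Rightarrow> 'r::comm_ring_1"
  assumes s: "rhom s" and d: "of_nat (Suc n) * (d::'r) = 0"
  shows "d = 0"
proof -
  have "s (inverse (of_nat (Suc n))) * of_nat (Suc n) = 1"
    using rhom_mult[OF s, of "inverse (of_nat (Suc n))" "of_nat (Suc n)"]
      rhom_of_nat[OF s, of "Suc n"] rhom_one[OF s] by (simp del: of_nat_Suc)
  then have "d = s (inverse (of_nat (Suc n))) * (of_nat (Suc n) * d)"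
    by (metis mult.assoc mult_1)
  with d show ?thesis by simp
qed

lemma fps_comp_nth [simp]: "fps_comp f A $ n = f (A $ n)"
  by (simp add: fps_comp_def)

lemma fps_comp_mult: "rhom f \<Longrightarrow> fps_comp f (A * B) = fps_comp f A * fps_comp f B"
  by (simp add: fps_eq_iff fps_mult_nth rhom_sum rhom_mult)

lemma rhom_fps_comp:
  assumes f: "rhom f"
  shows "rhom (fps_comp f)"
  unfolding rhom_def
  using fps_comp_mult[OF f] by (simp add: fps_eq_iff rhom_add[OF f] rhom_one[OF f] rhom_zero[OF f])

lemma fps_comp_const: "rhom f \<Longrightarrow> fps_comp f (fps_const c) = fps_const (f c)"
  by (simp add: fps_eq_iff rhom_zero)

lemma rhom_fps_const: "rhom (fps_const :: 'a::comm_ring_1 \<Rightarrow> 'a fps)"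
  by (simp add: rhom_def fps_const_add fps_const_mult)

lemma fps_comp_power: "rhom f \<Longrightarrow> fps_comp f (A ^ n) = fps_comp f A ^ n"
  using rhom_power[OF rhom_fps_comp] .

section \<open>Composition of power series over a commutative ring\<close>

text \<open>The library develops composition \<open>A oo Z\<close> over integral domains; the coefficient
  rings here (tensor squares of \<open>H_R\<close>, arbitrary algebras) are merely commutative, so the
  facts we need are established afresh for \<open>comm_ring_1\<close>.\<close>

lemma fps_mult_compose_nth:
  fixes A C Z :: "'a::comm_ring_1 fps"
  assumes Z0: "Z $ 0 = 0"
  shows "(A * (C oo Z)) $ m = (\<Sum>k\<le>m. C $ k * (A * Z ^ k) $ m)"
proof -
  have Zk: "\<And>k j. j < k \<Longrightarrow> (Z ^ k) $ j = 0"
    using startsby_zero_power_prefix[OF Z0] by blast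
  have "(A * (C oo Z)) $ m = (\<Sum>i=0..m. A $ i * (\<Sum>k=0..m-i. C $ k * (Z ^ k) $ (m - i)))"
    by (simp add: fps_mult_nth fps_compose_nth)
  also have "\<dots> = (\<Sum>i=0..m. \<Sum>k=0..m. A $ i * (C $ k * (Z ^ k) $ (m - i)))"
  proof (rule sum.cong[OF refl])
    fix i assume "i \<in> {0..m}"
    then have "(\<Sum>k=0..m-i. C $ k * (Z ^ k) $ (m - i)) = (\<Sum>k=0..m. C $ k * (Z ^ k) $ (m - i))"
      by (intro sum.mono_neutral_left) (auto simp: Zk)
    then show "A $ i * (\<Sum>k=0..m-i. C $ k * (Z ^ k) $ (m - i))
               = (\<Sum>k=0..m. A $ i * (C $ k * (Z ^ k) $ (m - i)))"
      by (simp add: sum_distrib_left)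
  qed
  also have "\<dots> = (\<Sum>k=0..m. \<Sum>i=0..m. A $ i * (C $ k * (Z ^ k) $ (m - i)))"
    by (rule sum.swap)
  also have "\<dots> = (\<Sum>k\<le>m. C $ k * (A * Z ^ k) $ m)"
    by (simp add: fps_mult_nth sum_distrib_left atMost_atLeast0 algebra_simps)
  finally show ?thesis .
qed

lemma fps_const_plus_X_shift:
  fixes a :: "'a::comm_ring_1 fps"
  shows "fps_const (a $ 0) + fps_X * fps_shift 1 a = a"
proof (rule fps_ext)
  show "(fps_const (a $ 0) + fps_X * fps_shift 1 a) $ n = a $ n" for n
    by (cases n) (simp_all add: fps_X_mult_nth)
qed

text \<open>A map \<open>\<Phi>\<close> of power series with \<open>\<Phi> a = c \<cdot> \<Phi> (shift a)\<close> and \<open>c\<^sub>0 = 0\<close> vanishes: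
  the \<open>n\<close>-th coefficient of \<open>\<Phi> a\<close> only sees lower coefficients of \<open>\<Phi> (shift a)\<close>.\<close>
lemma fps_vanish_by_shift:
  fixes \<Phi> :: "'a::comm_ring_1 fps \<Rightarrow> 'b::comm_ring_1 fps"
  assumes c0: "c $ 0 = 0" and rec: "\<And>a. \<Phi> a = c * \<Phi> (fps_shift 1 a)"
  shows "\<Phi> a = 0"
proof -
  have "\<forall>a. \<Phi> a $ n = 0" for n
  proof (induction n rule: less_induct)
    case (less n)
    show ?case
    proof
      fix a
      have "\<Phi> a $ n = (\<Sum>i=0..n. c $ i * \<Phi> (fps_shift 1 a) $ (n - i))"
        by (subst rec) (simp add: fps_mult_nth)
      also have "\<dots> = 0"
      proof (rule sum.neutral, intro ballI)
        fix i assume "i \<in> {0..n}"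
        then show "c $ i * \<Phi> (fps_shift 1 a) $ (n - i) = 0"
          using less c0 by (cases "i = 0") simp_all
      qed
      finally show "\<Phi> a $ n = 0" .
    qed
  qed
  then show ?thesis by (simp add: fps_eq_iff)
qed

lemma fps_compose_const_mult: "(fps_const x * a) oo c = fps_const (x::'a::comm_ring_1) * (a oo c)"
  by (simp add: fps_eq_iff fps_compose_nth sum_distrib_left mult.assoc)

lemma fps_compose_X_mult:
  fixes a c :: "'a::comm_ring_1 fps"
  assumes c0: "c $ 0 = 0"
  shows "(fps_X * a) oo c = c * (a oo c)"
proof (rule fps_ext)
  fix n
  have cn: "(c ^ Suc n) $ n = 0"
    using startsby_zero_power_prefix[OF c0] by blast
  have "((fps_X * a) oo c) $ n = (\<Sum>i=0..Suc n. (fps_X * a) $ i * (c ^ i) $ n)"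
    using cn by (simp add: fps_compose_nth del: power_Suc)
  also have "\<dots> = (\<Sum>i=0..n. (fps_X * a) $ Suc i * (c ^ Suc i) $ n)"
    by (subst sum.atLeast0_atMost_Suc_shift) simp
  also have "\<dots> = (\<Sum>k\<le>n. a $ k * (c * c ^ k) $ n)"
    by (simp add: atMost_atLeast0)
  also have "\<dots> = (c * (a oo c)) $ n"
    by (simp add: fps_mult_compose_nth[OF c0])
  finally show "((fps_X * a) oo c) $ n = (c * (a oo c)) $ n" .
qed

lemma fps_compose_mult_distrib_comm:
  fixes a b c :: "'a::comm_ring_1 fps"
  assumes c0: "c $ 0 = 0"
  shows "(a * b) oo c = (a oo c) * (b oo c)"
proof -
  define \<Phi> where "\<Phi> f = ((f * b) oo c) - (f oo c) * (b oo c)" for f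
  have "\<Phi> f = c * \<Phi> (fps_shift 1 f)" for f
  proof -
    define f' where "f' = fps_shift 1 f"
    have f: "f = fps_const (f $ 0) + fps_X * f'"
      unfolding f'_def by (rule fps_const_plus_X_shift[symmetric])
    have "f * b = fps_const (f $ 0) * b + fps_X * (f' * b)"
      by (subst f) (simp add: algebra_simps)
    then have fb: "(f * b) oo c = fps_const (f $ 0) * (b oo c) + c * ((f' * b) oo c)"
      by (simp add: fps_compose_add_distrib fps_compose_const_mult fps_compose_X_mult[OF c0])
    have fc: "f oo c = fps_const (f $ 0) + c * (f' oo c)"
      by (subst f) (simp add: fps_compose_add_distrib fps_compose_X_mult[OF c0])
    show ?thesis
      unfolding \<Phi>_def fb fc f'_def[symmetric] by (simp add: algebra_simps)
  qed
  then have "\<Phi> a = 0" by (rule fps_vanish_by_shift[OF c0])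
  then show ?thesis by (simp add: \<Phi>_def)
qed

lemma rhom_fps_compose: "Z $ 0 = 0 \<Longrightarrow> rhom (\<lambda>A::'a::comm_ring_1 fps. A oo Z)"
  by (simp add: rhom_def fps_compose_add_distrib fps_compose_mult_distrib_comm)

section \<open>Causal maps of power series\<close>

text \<open>Truncation arguments rest on this.\<close>
definition fps_causal :: "('a fps \<Rightarrow> 'b fps) \<Rightarrow> bool" where
  "fps_causal \<Phi> \<longleftrightarrow> (\<forall>A A' n. (\<forall>j\<le>n. A $ j = A' $ j) \<longrightarrow> \<Phi> A $ n = \<Phi> A' $ n)"

lemma fps_causalD: "fps_causal \<Phi> \<Longrightarrow> (\<And>j. j \<le> n \<Longrightarrow> A $ j = A' $ j) \<Longrightarrow> \<Phi> A $ n = \<Phi> A' $ n"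
  by (simp add: fps_causal_def)

lemma fps_causal_fps_comp: "fps_causal (fps_comp f)"
  by (simp add: fps_causal_def)

lemma fps_causal_compose: "fps_causal (\<lambda>A. A oo Z)"
  by (simp add: fps_causal_def fps_compose_nth)

lemma fps_causal_mult: "fps_causal (\<lambda>A. C * A)"
  by (auto simp: fps_causal_def fps_mult_nth intro!: sum.cong)

lemma fps_causal_power: "fps_causal (\<lambda>A. A ^ k)"
proof (induction k)
  case 0 then show ?case by (simp add: fps_causal_def)
next
  case (Suc k)
  show ?case unfolding fps_causal_def
  proof (intro allI impI)
    fix A A' :: "'a fps" and n assume eq: "\<forall>j\<le>n. A $ j = A' $ j"
    have "(A ^ Suc k) $ n = (\<Sum>i=0..n. A $ i * (A ^ k) $ (n - i))" by (simp add: fps_mult_nth)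
    also have "\<dots> = (\<Sum>i=0..n. A' $ i * (A' ^ k) $ (n - i))"
      using eq fps_causalD[OF Suc.IH, of "n - _" A A'] by (intro sum.cong) auto
    finally show "(A ^ Suc k) $ n = (A' ^ Suc k) $ n" by (simp add: fps_mult_nth)
  qed
qed

section \<open>Generalised powers\<close>

text \<open>Its algebraic laws are derived from
  the characterisation of \<open>Y\<^sup>p\<close> as the unique solution of \<open>Y Z' = p Y' Z\<close> with \<open>Z\<^sub>0 = 1\<close>; its
  naturality from a truncation argument.\<close>

lemma gpow_nth: "fps_gpow s p Y $ n = (\<Sum>k\<le>n. s (p gchoose k) * ((Y - 1) ^ k) $ n)"
  by (simp add: fps_gpow_def)

lemma gpow_nth_0: "rhom s \<Longrightarrow> fps_gpow s p Y $ 0 = 1"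
  by (simp add: gpow_nth rhom_one)

lemma fps_causal_gpow: "fps_causal (fps_gpow s p)"
  unfolding fps_causal_def
proof (intro allI impI)
  fix A A' :: "'a fps" and n assume "\<forall>j\<le>n. A $ j = A' $ j"
  then have "((A - 1) ^ k) $ n = ((A' - 1) ^ k) $ n" for k
    by (intro fps_causalD[OF fps_causal_power]) simp
  then show "fps_gpow s p A $ n = fps_gpow s p A' $ n"
    by (simp add: gpow_nth)
qed

definition gpow_trunc :: "('k::field_char_0 \<Rightarrow> 'r::comm_ring_1) \<Rightarrow> 'k \<Rightarrow> 'r fps \<Rightarrow> nat \<Rightarrow> 'r fps" where
  "gpow_trunc s p Y M = (\<Sum>k\<le>M. fps_const (s (p gchoose k)) * (Y - 1) ^ k)"

lemma gpow_eq_trunc: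
  assumes Y0: "Y $ 0 = 1" and nM: "n \<le> M"
  shows "fps_gpow s p Y $ n = gpow_trunc s p Y M $ n"
proof -
  have U0: "(Y - 1) $ 0 = 0" using Y0 by simp
  have "gpow_trunc s p Y M $ n = (\<Sum>k\<le>M. s (p gchoose k) * ((Y - 1) ^ k) $ n)"
    by (simp add: gpow_trunc_def fps_sum_nth)
  also have "\<dots> = (\<Sum>k\<le>n. s (p gchoose k) * ((Y - 1) ^ k) $ n)"
    using nM startsby_zero_power_prefix[OF U0] by (intro sum.mono_neutral_right) auto
  finally show ?thesis by (simp add: gpow_nth)
qed

text \<open>Naturality: a causal ring homomorphism of power series that maps the scalars
  \<open>s c\<close> to \<open>s' c\<close> commutes with generalised powers, since it does so on every truncation.\<close>
lemma gpow_natural: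
  fixes s :: "'k::field_char_0 \<Rightarrow> 'r::comm_ring_1" and s' :: "'k \<Rightarrow> 'q::comm_ring_1"
    and \<Phi> :: "'r fps \<Rightarrow> 'q fps"
  assumes hom: "rhom \<Phi>" and causal: "fps_causal \<Phi>"
    and const: "\<And>c. \<Phi> (fps_const (s c)) = fps_const (s' c)"
    and Y0: "Y $ 0 = 1"
  shows "\<Phi> (fps_gpow s p Y) = fps_gpow s' p (\<Phi> Y)"
proof (rule fps_ext)
  fix n
  have \<Phi>Y0: "\<Phi> Y $ 0 = 1"
    using fps_causalD[OF causal, of 0 Y 1] Y0 rhom_one[OF hom] by simp
  have "\<Phi> (fps_gpow s p Y) $ n = \<Phi> (gpow_trunc s p Y n) $ n"
    by (rule fps_causalD[OF causal]) (simp add: gpow_eq_trunc[OF Y0])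
  also have "\<Phi> (gpow_trunc s p Y n) = gpow_trunc s' p (\<Phi> Y) n"
    by (simp add: gpow_trunc_def rhom_sum[OF hom] rhom_mult[OF hom] rhom_power[OF hom]
        rhom_diff[OF hom] rhom_one[OF hom] const)
  also have "\<dots> $ n = fps_gpow s' p (\<Phi> Y) $ n"
    by (rule gpow_eq_trunc[OF \<Phi>Y0, symmetric]) simp
  finally show "\<Phi> (fps_gpow s p Y) $ n = fps_gpow s' p (\<Phi> Y) $ n" .
qed

text \<open>The recursion \<open>(k + 1) (p choose k + 1) = (p - k) (p choose k)\<close> of the binomial
  coefficients, which drives the differential equation of generalised powers.\<close>
lemma gbinomial_Suc_rec:
  fixes p :: "'k::field_char_0"
  shows "of_nat (Suc k) * (p gchoose Suc k) = (p - of_nat k) * (p gchoose k)"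
  using gbinomial_absorption[of k p] gbinomial_absorb_comp[of p k] by simp

lemma gpow_trunc_ode:
  fixes s :: "'k::field_char_0 \<Rightarrow> 'r::comm_ring_1"
  assumes s: "rhom s"
  shows "Y * fps_deriv (gpow_trunc s p Y M) - fps_const (s p) * fps_deriv Y * gpow_trunc s p Y M
       = fps_const (s ((of_nat M - p) * (p gchoose M))) * fps_deriv Y * (Y - 1) ^ M"
proof (induction M)
  case 0
  have "gpow_trunc s p Y 0 = 1" by (simp add: gpow_trunc_def rhom_one[OF s])
  then show ?case by (simp add: rhom_uminus[OF s] flip: fps_const_neg)
next
  case (Suc M)
  define U where "U = Y - 1"
  define a where "a = fps_const (s (p gchoose M))"
  define a' where "a' = fps_const (s (p gchoose Suc M))"
  define P where "P = fps_const (s p)"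
  define S where "S = gpow_trunc s p Y M"
  have c: "rhom (fps_const \<circ> s)" by (rule rhom_comp[OF s rhom_fps_const])
  have err: "fps_const (s ((of_nat j - p) * (p gchoose j))) = (of_nat j - P) * fps_const (s (p gchoose j))"
    for j using rhom_mult[OF c] rhom_diff[OF c] rhom_of_nat[OF c] unfolding P_def o_def by metis
  have rel: "of_nat (Suc M) * a' = (P - of_nat M) * a"
    using gbinomial_Suc_rec[of M p] rhom_mult[OF c] rhom_diff[OF c] rhom_of_nat[OF c]
    unfolding a_def a'_def P_def o_def by metis
  have Y: "Y = U + 1" and dY: "fps_deriv Y = fps_deriv U" by (simp_all add: U_def)
  have SS: "gpow_trunc s p Y (Suc M) = S + a' * U ^ Suc M"
    by (simp add: gpow_trunc_def S_def a'_def U_def)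
  have dSS: "fps_deriv (gpow_trunc s p Y (Suc M)) = fps_deriv S + a' * (of_nat (Suc M) * fps_deriv U * U ^ M)"
    unfolding SS by (simp add: fps_deriv_power' a'_def del: of_nat_Suc power_Suc)
  have IH: "Y * fps_deriv S - P * fps_deriv Y * S = (of_nat M - P) * a * fps_deriv U * U ^ M"
    using Suc.IH unfolding S_def P_def err dY U_def a_def .
  have "Y * fps_deriv (gpow_trunc s p Y (Suc M)) - P * fps_deriv Y * gpow_trunc s p Y (Suc M)
      = (Y * fps_deriv S - P * fps_deriv Y * S)
        + fps_deriv U * U ^ M * (of_nat (Suc M) * a' - (P - of_nat M) * a)
        + fps_deriv U * U ^ M * ((P - of_nat M) * a)
        + (of_nat (Suc M) - P) * a' * fps_deriv U * U ^ Suc M"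
    unfolding dSS unfolding SS unfolding dY by (simp add: Y algebra_simps del: of_nat_Suc)
  also have "\<dots> = (of_nat (Suc M) - P) * a' * fps_deriv U * U ^ Suc M"
    unfolding IH rel by (simp add: algebra_simps del: of_nat_Suc)
  finally show ?case unfolding P_def err dY U_def a'_def .
qed

text \<open>The differential equation \<open>Y (Y\<^sup>p)' = p Y' Y\<^sup>p\<close>: in degree \<open>n\<close> both sides only involve the
  truncation at \<open>n + 1\<close>, whose error term starts in degree \<open>n + 1\<close>.\<close>
lemma gpow_ode:
  fixes s :: "'k::field_char_0 \<Rightarrow> 'r::comm_ring_1"
  assumes s: "rhom s" and Y0: "Y $ 0 = 1"
  shows "Y * fps_deriv (fps_gpow s p Y) = fps_const (s p) * fps_deriv Y * fps_gpow s p Y"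
proof (rule fps_ext)
  fix n
  define S where "S = gpow_trunc s p Y (Suc n)"
  define E where "E = fps_const (s ((of_nat (Suc n) - p) * (p gchoose Suc n))) * fps_deriv Y"
  have "j \<le> n \<Longrightarrow> fps_deriv (fps_gpow s p Y) $ j = fps_deriv S $ j" for j
    using gpow_eq_trunc[OF Y0, where n="Suc j" and M="Suc n" and s=s and p=p] by (simp add: S_def)
  then have lhs: "(Y * fps_deriv (fps_gpow s p Y)) $ n = (Y * fps_deriv S) $ n"
    by (rule fps_causalD[OF fps_causal_mult])
  have "j \<le> n \<Longrightarrow> fps_gpow s p Y $ j = S $ j" for j
    using gpow_eq_trunc[OF Y0, where n=j and M="Suc n" and s=s and p=p] by (simp add: S_def)
  then have rhs: "(fps_const (s p) * fps_deriv Y * fps_gpow s p Y) $ n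
                  = (fps_const (s p) * fps_deriv Y * S) $ n"
    by (rule fps_causalD[OF fps_causal_mult])
  have U0: "(Y - 1) $ 0 = 0" using Y0 by simp
  have "((Y - 1) ^ Suc n) $ j = 0" if "j \<le> n" for j
    using startsby_zero_power_prefix[OF U0] that by (simp del: power_Suc)
  then have "(E * (Y - 1) ^ Suc n) $ n = 0"
    using fps_causalD[OF fps_causal_mult, of n "(Y - 1) ^ Suc n" 0 E] by simp
  then have "(Y * fps_deriv S - fps_const (s p) * fps_deriv Y * S) $ n = 0"
    using gpow_trunc_ode[OF s, of Y p "Suc n"] by (simp add: S_def E_def mult.assoc)
  then show "(Y * fps_deriv (fps_gpow s p Y)) $ n = (fps_const (s p) * fps_deriv Y * fps_gpow s p Y) $ n"
    using lhs rhs by simp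
qed

text \<open>Uniqueness for the linear ODE \<open>Y Z' = c Y' Z\<close> given the constant term: comparing
  coefficients, \<open>(n + 1) Z\<^sub>n\<^sub>+\<^sub>1\<close> is determined by lower coefficients, and the
  coefficient ring has no torsion.\<close>
lemma fps_ode_unique:
  fixes s :: "'k::field_char_0 \<Rightarrow> 'r::comm_ring_1" and Y Z W :: "'r fps"
  assumes s: "rhom s" and Y0: "Y $ 0 = 1"
    and Z: "Y * fps_deriv Z = c * fps_deriv Y * Z"
    and W: "Y * fps_deriv W = c * fps_deriv Y * W"
    and ZW0: "Z $ 0 = W $ 0"
  shows "Z = W"
proof -
  define D where "D = Z - W"
  have DE: "Y * fps_deriv D = c * fps_deriv Y * D"
    using Z W by (simp add: D_def algebra_simps)
  have "D $ n = 0" for n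
  proof (induction n rule: less_induct)
    case (less n)
    show ?case
    proof (cases n)
      case 0 then show ?thesis using ZW0 by (simp add: D_def)
    next
      case (Suc m)
      have r: "(c * fps_deriv Y * D) $ m = 0"
        unfolding fps_mult_nth using less Suc by (intro sum.neutral) auto
      have "(Y * fps_deriv D) $ m = (\<Sum>i=0..m. Y $ i * (of_nat (Suc (m - i)) * D $ Suc (m - i)))"
        by (simp add: fps_mult_nth del: of_nat_Suc)
      also have "\<dots> = (\<Sum>i\<in>{0}. Y $ i * (of_nat (Suc (m - i)) * D $ Suc (m - i)))"
        using less Suc by (intro sum.mono_neutral_right) auto
      also have "\<dots> = of_nat (Suc m) * D $ Suc m" using Y0 by simp
      finally have "of_nat (Suc m) * D $ Suc m = 0" using DE r by simp
      then show ?thesis using rhom_torsion_free[OF s] Suc by blast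
    qed
  qed
  then show ?thesis by (simp add: D_def fps_eq_iff)
qed

lemma gpow_unique:
  fixes s :: "'k::field_char_0 \<Rightarrow> 'r::comm_ring_1" and Y Z :: "'r fps"
  assumes s: "rhom s" and Y0: "Y $ 0 = 1"
    and Z: "Y * fps_deriv Z = fps_const (s p) * fps_deriv Y * Z" and Z0: "Z $ 0 = 1"
  shows "Z = fps_gpow s p Y"
  by (rule fps_ode_unique[OF s Y0 Z gpow_ode[OF s Y0]]) (simp add: Z0 gpow_nth_0[OF s])

text \<open>The exponent laws \<open>Y\<^sup>p Y\<^sup>q = Y\<^sup>p\<^sup>+\<^sup>q\<close>, \<open>Y\<^sup>1 = Y\<close>, \<open>Y\<^sup>0 = 1\<close>, \<open>(AB)\<^sup>p = A\<^sup>p B\<^sup>p\<close>: in each case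
  both sides solve the same ODE.\<close>
lemma gpow_add:
  fixes s :: "'k::field_char_0 \<Rightarrow> 'r::comm_ring_1"
  assumes s: "rhom s" and Y0: "Y $ 0 = 1"
  shows "fps_gpow s p Y * fps_gpow s q Y = fps_gpow s (p + q) Y"
proof (rule gpow_unique[OF s Y0])
  show "(fps_gpow s p Y * fps_gpow s q Y) $ 0 = 1" by (simp add: gpow_nth_0[OF s])
  have p: "Y * fps_deriv (fps_gpow s p Y) = fps_const (s p) * fps_deriv Y * fps_gpow s p Y"
    and q: "Y * fps_deriv (fps_gpow s q Y) = fps_const (s q) * fps_deriv Y * fps_gpow s q Y"
    using gpow_ode[OF s Y0] by auto
  have "Y * fps_deriv (fps_gpow s p Y * fps_gpow s q Y)
     = fps_gpow s p Y * (Y * fps_deriv (fps_gpow s q Y)) + (Y * fps_deriv (fps_gpow s p Y)) * fps_gpow s q Y"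
    by (simp add: algebra_simps)
  also have "\<dots> = fps_const (s (p + q)) * fps_deriv Y * (fps_gpow s p Y * fps_gpow s q Y)"
    unfolding p q by (simp add: rhom_add[OF s] algebra_simps flip: fps_const_add)
  finally show "Y * fps_deriv (fps_gpow s p Y * fps_gpow s q Y) =
      fps_const (s (p + q)) * fps_deriv Y * (fps_gpow s p Y * fps_gpow s q Y)" .
qed

lemma gpow_one:
  assumes s: "rhom s" and Y0: "Y $ 0 = 1"
  shows "fps_gpow s 1 Y = Y"
  by (rule gpow_unique[OF s Y0, symmetric]) (simp_all add: Y0 rhom_one[OF s] mult.commute)

lemma gpow_zero:
  assumes s: "rhom s" and Y0: "Y $ 0 = 1"
  shows "fps_gpow s 0 Y = 1"
  by (rule gpow_unique[OF s Y0, symmetric]) (simp_all add: rhom_zero[OF s])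

lemma gpow_of_nat_mult:
  assumes s: "rhom s" and Y0: "Y $ 0 = 1"
  shows "fps_gpow s (of_nat n * p) Y = fps_gpow s p Y ^ n"
proof (induction n)
  case 0 then show ?case using gpow_zero[OF s Y0] by simp
next
  case (Suc n)
  have "fps_gpow s (of_nat (Suc n) * p) Y = fps_gpow s p Y * fps_gpow s (of_nat n * p) Y"
    using gpow_add[OF s Y0, of p "of_nat n * p"] by (simp add: algebra_simps)
  then show ?case using Suc by simp
qed

lemma gpow_mult_base:
  fixes s :: "'k::field_char_0 \<Rightarrow> 'r::comm_ring_1"
  assumes s: "rhom s" and A0: "A $ 0 = 1" and B0: "B $ 0 = 1"
  shows "fps_gpow s p (A * B) = fps_gpow s p A * fps_gpow s p B"
proof (rule gpow_unique[OF s, symmetric])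
  show "(A * B) $ 0 = 1" using A0 B0 by simp
  show "(fps_gpow s p A * fps_gpow s p B) $ 0 = 1" by (simp add: gpow_nth_0[OF s])
  have a: "A * fps_deriv (fps_gpow s p A) = fps_const (s p) * fps_deriv A * fps_gpow s p A"
    and b: "B * fps_deriv (fps_gpow s p B) = fps_const (s p) * fps_deriv B * fps_gpow s p B"
    using gpow_ode[OF s A0] gpow_ode[OF s B0] by auto
  have "A * B * fps_deriv (fps_gpow s p A * fps_gpow s p B)
     = A * fps_gpow s p A * (B * fps_deriv (fps_gpow s p B)) + B * fps_gpow s p B * (A * fps_deriv (fps_gpow s p A))"
    by (simp add: algebra_simps)
  also have "\<dots> = fps_const (s p) * fps_deriv (A * B) * (fps_gpow s p A * fps_gpow s p B)"
    unfolding a b by (simp add: algebra_simps)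
  finally show "A * B * fps_deriv (fps_gpow s p A * fps_gpow s p B) =
    fps_const (s p) * fps_deriv (A * B) * (fps_gpow s p A * fps_gpow s p B)" .
qed

lemma gpow_fps_comp:
  fixes s :: "'k::field_char_0 \<Rightarrow> 'r::comm_ring_1" and s' :: "'k \<Rightarrow> 'q::comm_ring_1"
  assumes f: "rhom f" and fs: "\<And>c. f (s c) = s' c" and Y0: "Y $ 0 = 1"
  shows "fps_comp f (fps_gpow s p Y) = fps_gpow s' p (fps_comp f Y)"
  by (rule gpow_natural[OF rhom_fps_comp[OF f] fps_causal_fps_comp _ Y0])
     (simp add: fps_comp_const[OF f] fs)

lemma gpow_compose:
  fixes s :: "'k::field_char_0 \<Rightarrow> 'r::comm_ring_1"
  assumes Y0: "Y $ 0 = 1" and Z0: "Z $ 0 = 0"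
  shows "fps_gpow s p Y oo Z = fps_gpow s p (Y oo Z)"
  by (rule gpow_natural[OF rhom_fps_compose[OF Z0] fps_causal_compose _ Y0]) simp

section \<open>Linear extension from the forest basis\<close>

definition lin_ext :: "('k::comm_ring_1 \<Rightarrow> 'r::comm_ring_1) \<Rightarrow> ('b \<Rightarrow> 'r) \<Rightarrow> ('b \<Rightarrow>\<^sub>0 'k) \<Rightarrow> 'r" where
  "lin_ext s f x = (\<Sum>F\<in>Poly_Mapping.keys x. s (Poly_Mapping.lookup x F) * f F)"

definition scalar :: "'k::comm_ring_1 \<Rightarrow> ('b::comm_monoid_add \<Rightarrow>\<^sub>0 'k)" where
  "scalar c = Poly_Mapping.single 0 c"

abbreviation eb :: "'b \<Rightarrow> ('b \<Rightarrow>\<^sub>0 'k::comm_ring_1)" where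
  "eb F \<equiv> Poly_Mapping.single F 1"

lemma lin_ext_zero [simp]: "lin_ext s f 0 = 0"
  by (simp add: lin_ext_def)

lemma lin_ext_add: "rhom s \<Longrightarrow> lin_ext s f (x + y) = lin_ext s f x + lin_ext s f y"
  unfolding lin_ext_def
  by (rule setsum_keys_plus_distrib) (simp_all add: rhom_zero rhom_add distrib_right)

lemma lin_ext_single: "rhom s \<Longrightarrow> lin_ext s f (Poly_Mapping.single a c) = s c * f a"
  by (simp add: lin_ext_def rhom_zero)

lemma lin_ext_sum: "rhom s \<Longrightarrow> lin_ext s f (sum g S) = (\<Sum>i\<in>S. lin_ext s f (g i))"
  by (induction S rule: infinite_finite_induct) (simp_all add: lin_ext_add)

lemma lin_ext_cong: "(\<And>a. f a = g a) \<Longrightarrow> lin_ext s f x = lin_ext s g x"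
  by (simp add: lin_ext_def)

lemma poly_mapping_add_single_induct:
  assumes "P 0" and "\<And>f a b. P f \<Longrightarrow> P (f + Poly_Mapping.single a b)"
  shows "P x"
proof (induction x rule: update_induct)
  case const then show ?case using assms(1) .
next
  case (update f a b)
  have "Poly_Mapping.update a b f = f + Poly_Mapping.single a b"
    using update(1)
    by (intro poly_mapping_eqI) (auto simp: lookup_update lookup_add lookup_single in_keys_iff when_def)
  then show ?case using assms(2)[OF update(3)] by simp
qed

lemma lin_ext_mult:
  assumes s: "rhom s" and f: "\<And>a b. f (a + b) = f a * f b"
  shows "lin_ext s f (x * y) = lin_ext s f x * lin_ext s f y"
proof (induction x rule: poly_mapping_add_single_induct)
  case 1 then show ?case by simp
next
  case (2 x a b)
  have "lin_ext s f (Poly_Mapping.single a b * y) = s b * f a * lin_ext s f y"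
  proof (induction y rule: poly_mapping_add_single_induct)
    case 1 then show ?case by simp
  next
    case (2 y a' b')
    then show ?case
      by (simp add: distrib_left lin_ext_add[OF s] mult_single lin_ext_single[OF s]
          rhom_mult[OF s] f algebra_simps)
  qed
  then show ?case using 2
    by (simp add: distrib_right lin_ext_add[OF s] lin_ext_single[OF s] algebra_simps)
qed

lemma rhom_lin_ext:
  "rhom s \<Longrightarrow> (\<And>a b. f (a + b) = f a * f b) \<Longrightarrow> f 0 = 1 \<Longrightarrow> rhom (lin_ext s f)"
  using lin_ext_single[of s f 0 1]
  by (simp add: rhom_def lin_ext_add lin_ext_mult rhom_one)

lemma lin_ext_hom:
  fixes f :: "'b \<Rightarrow> 'r::comm_ring_1" and g :: "'r \<Rightarrow> 'q::comm_ring_1"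
  assumes add: "\<And>x y. g (x + y) = g x + g y" and sm: "\<And>c y. g (s c * y) = s' c * g y"
  shows "g (lin_ext s f x) = lin_ext s' (g \<circ> f) x"
proof -
  have g0: "g 0 = 0" using add[of 0 0] by simp
  have "g (sum h S) = (\<Sum>i\<in>S. g (h i))" for h :: "'b \<Rightarrow> 'r" and S
    by (induction S rule: infinite_finite_induct) (simp_all add: g0 add)
  then show ?thesis by (simp add: lin_ext_def sm)
qed

lemma rhom_scalar: "rhom scalar"
  by (simp add: rhom_def scalar_def single_add mult_single)

lemma scalar_mult_eb: "scalar c * eb k = Poly_Mapping.single k c"
  by (simp add: scalar_def mult_single)

lemma lin_ext_eb: "lin_ext scalar eb x = x"
proof (induction x rule: poly_mapping_add_single_induct)
  case 1 then show ?case by simp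
next
  case (2 f a b) then show ?case
    by (simp add: lin_ext_add[OF rhom_scalar] lin_ext_single[OF rhom_scalar] scalar_mult_eb)
qed

lemma semilinear_expand:
  fixes g :: "('b::comm_monoid_add \<Rightarrow>\<^sub>0 'k::comm_ring_1) \<Rightarrow> 'q::comm_ring_1"
  assumes add: "\<And>x y. g (x + y) = g x + g y" and sm: "\<And>c y. g (scalar c * y) = s' c * g y"
  shows "g x = (\<Sum>a\<in>Poly_Mapping.keys x. s' (Poly_Mapping.lookup x a) * g (eb a))"
  using lin_ext_hom[of g scalar s' eb x, OF add sm] lin_ext_eb[of x]
  by (simp add: lin_ext_def o_def)

lemma lin_ext_scalar_mult:
  assumes s: "rhom s"
  shows "lin_ext s f (scalar c * y) = s c * lin_ext s f y"
proof (induction y rule: poly_mapping_add_single_induct)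
  case 1 then show ?case by simp
next
  case (2 y a b) then show ?case
    by (simp add: distrib_left lin_ext_add[OF s] scalar_def mult_single lin_ext_single[OF s]
        rhom_mult[OF s] algebra_simps)
qed

lemma rhom_scalar_mult: "rhom g \<Longrightarrow> g (scalar c) = scalar c \<Longrightarrow> g (scalar c * y) = scalar c * g y"
  by (simp add: rhom_mult)

lemma pm_smult_scalar: "pm_smult c x = scalar c * x"
  by (simp add: pm_smult_def scalar_def mult_map_scale_conv_mult)

lemma HR_scalar_eq_scalar: "HR_scalar = scalar"
  by (simp add: fun_eq_iff HR_scalar_def scalar_def)

section \<open>The tensor square and the coproduct\<close>

text \<open>The embeddings \<open>x \<mapsto> x \<otimes> 1\<close> and \<open>y \<mapsto> 1 \<otimes> y\<close> of \<open>H_R\<close> into \<open>H_R \<otimes> H_R\<close>; they are ring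
  homomorphisms and \<open>x \<otimes> y\<close> is their product.\<close>
definition left_emb :: "'k::comm_ring_1 HR \<Rightarrow> 'k HR2" where
  "left_emb = lin_ext scalar (\<lambda>F. eb (F, 0))"

definition right_emb :: "'k::comm_ring_1 HR \<Rightarrow> 'k HR2" where
  "right_emb = lin_ext scalar (\<lambda>G. eb (0, G))"

text \<open>The unit of \<open>H_R \<otimes> H_R\<close> is the pair of empty forests.\<close>
lemma zero_pair: "((0::'a::zero), (0::'b::zero)) = 0"
  by (simp add: zero_prod_def)

lemma rhom_left_emb: "rhom (left_emb :: 'k::comm_ring_1 HR \<Rightarrow> 'k HR2)"
  unfolding left_emb_def by (rule rhom_lin_ext[OF rhom_scalar]) (simp_all add: mult_single zero_pair)

lemma rhom_right_emb: "rhom (right_emb :: 'k::comm_ring_1 HR \<Rightarrow> 'k HR2)"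
  unfolding right_emb_def by (rule rhom_lin_ext[OF rhom_scalar]) (simp_all add: mult_single zero_pair)

lemma left_emb_scalar: "left_emb (scalar c) = scalar c"
  by (simp add: left_emb_def scalar_def lin_ext_single[OF rhom_scalar] scalar_mult_eb zero_pair)

lemma right_emb_scalar: "right_emb (scalar c) = scalar c"
  by (simp add: right_emb_def scalar_def lin_ext_single[OF rhom_scalar] scalar_mult_eb zero_pair)

lemma emb_mult_expand: "left_emb x * right_emb y = (\<Sum>a\<in>Poly_Mapping.keys x. \<Sum>b\<in>Poly_Mapping.keys y.
      Poly_Mapping.single (a, b) (Poly_Mapping.lookup x a * Poly_Mapping.lookup y b))"
  by (simp add: left_emb_def right_emb_def lin_ext_def scalar_mult_eb sum_product mult_single)

lemma tensor_eq_emb: "tensor x y = left_emb x * right_emb y"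
  by (simp add: tensor_def emb_mult_expand)

lemma lin_ext_tensor:
  assumes s: "rhom s"
  shows "lin_ext s h (left_emb x * right_emb y) = (\<Sum>a\<in>Poly_Mapping.keys x. \<Sum>b\<in>Poly_Mapping.keys y.
      s (Poly_Mapping.lookup x a) * s (Poly_Mapping.lookup y b) * h (a, b))"
  by (simp add: emb_mult_expand lin_ext_sum[OF s] lin_ext_single[OF s] rhom_mult[OF s])

lemma Delta_eq_lin_ext: "Delta = lin_ext scalar delta_forest"
  by (simp add: fun_eq_iff Delta_def lin_ext_def pm_smult_scalar)

text \<open>The coproduct is an algebra morphism since it is multiplicative on forests.\<close>
lemma rhom_Delta: "rhom (Delta :: 'k::comm_ring_1 HR \<Rightarrow> 'k HR2)"
  unfolding Delta_eq_lin_ext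
  by (rule rhom_lin_ext[OF rhom_scalar]) (simp_all add: delta_forest_def)

lemma Delta_scalar: "Delta (scalar c) = scalar c"
  by (simp add: Delta_eq_lin_ext scalar_def lin_ext_single[OF rhom_scalar] delta_forest_def scalar_mult_eb)

lemma counit_eq_lin_ext: "counit x = lin_ext (\<lambda>c. c) (\<lambda>F. if F = 0 then 1 else 0) x"
  by (simp add: counit_def lin_ext_def mult_delta_right sum.delta in_keys_iff)

lemma rhom_counit: "rhom (counit :: 'k::comm_ring_1 HR \<Rightarrow> 'k)"
  unfolding counit_eq_lin_ext[abs_def] by (rule rhom_lin_ext) (auto simp: rhom_def)

lemma counit_scalar: "counit (scalar c) = c"
  by (simp add: counit_def scalar_def)

section \<open>Hochschild 1-cocycles take values in the augmentation ideal\<close>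

text \<open>Applied to the cocycle equation it shows
  \<open>\<epsilon> \<circ> B = 0\<close>, using the counit property \<open>(\<epsilon> \<otimes> id) \<circ> \<Delta> = id\<close>.\<close>
definition counit_left :: "'k::comm_ring_1 HR2 \<Rightarrow> 'k HR" where
  "counit_left = lin_ext scalar (\<lambda>ab. if fst ab = 0 then eb (snd ab) else 0)"

lemma rhom_counit_left: "rhom (counit_left :: 'k::comm_ring_1 HR2 \<Rightarrow> 'k HR)"
  unfolding counit_left_def by (rule rhom_lin_ext[OF rhom_scalar]) (auto simp: mult_single)

lemma counit_left_scalar: "counit_left (scalar c) = scalar c"
  by (simp add: counit_left_def scalar_def lin_ext_single[OF rhom_scalar] scalar_mult_eb)

text \<open>\<open>counit_left\<close> is \<open>H_R\<close>-semilinear, so it commutes with linear extensions.\<close>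
lemma counit_left_lin_ext:
  "counit_left (lin_ext scalar f x) = lin_ext scalar (counit_left \<circ> f) x"
  by (rule lin_ext_hom)
     (simp_all add: rhom_add[OF rhom_counit_left] rhom_scalar_mult[OF rhom_counit_left counit_left_scalar])

lemma counit_left_left_emb: "counit_left (left_emb x) = scalar (counit x)"
proof -
  have "counit_left (left_emb x) = lin_ext scalar (scalar \<circ> (\<lambda>F. if F = 0 then 1 else 0)) x"
    unfolding left_emb_def counit_left_lin_ext
    by (rule lin_ext_cong) (simp add: counit_left_def lin_ext_single[OF rhom_scalar] scalar_def)
  also have "\<dots> = scalar (counit x)"
    unfolding counit_eq_lin_ext
    by (rule lin_ext_hom[symmetric]) (simp_all add: rhom_add[OF rhom_scalar] rhom_mult[OF rhom_scalar])
  finally show ?thesis .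
qed

lemma counit_left_right_emb: "counit_left (right_emb x) = x"
proof -
  have "counit_left (right_emb x) = lin_ext scalar eb x"
    unfolding right_emb_def counit_left_lin_ext
    by (rule lin_ext_cong) (simp add: counit_left_def lin_ext_single[OF rhom_scalar] scalar_mult_eb)
  then show ?thesis by (simp add: lin_ext_eb)
qed

definition Bplus :: "'k::comm_ring_1 HR \<Rightarrow> 'k HR" where
  "Bplus = lin_ext scalar (\<lambda>G. eb {# Node G #})"

lemma counit_left_id_tensor_Bplus: "counit_left (id_tensor_Bplus t) = Bplus (counit_left t)"
proof -
  have "id_tensor_Bplus t = lin_ext scalar (\<lambda>ab. eb (fst ab, {# Node (snd ab) #})) t"
    by (simp add: id_tensor_Bplus_def lin_ext_def scalar_mult_eb)
  then have "counit_left (id_tensor_Bplus t)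
      = lin_ext scalar (counit_left \<circ> (\<lambda>ab. eb (fst ab, {# Node (snd ab) #}))) t"
    by (simp add: counit_left_lin_ext)
  also have "\<dots> = lin_ext scalar (Bplus \<circ> (\<lambda>ab. if fst ab = 0 then eb (snd ab) else 0)) t"
    by (rule lin_ext_cong) (simp add: counit_left_def Bplus_def lin_ext_single[OF rhom_scalar] scalar_mult_eb)
  also have "\<dots> = Bplus (counit_left t)"
    unfolding counit_left_def
    by (rule lin_ext_hom[symmetric])
       (simp_all add: Bplus_def lin_ext_add[OF rhom_scalar] lin_ext_scalar_mult[OF rhom_scalar])
  finally show ?thesis .
qed

lemma prod_mset_eb_singletons: "prod_mset (image_mset (\<lambda>t. eb {#t#}) G) = (eb G :: 'k::comm_ring_1 HR)"
  by (induction G) (simp_all add: mult_single add_mset_add_single[symmetric] add.commute)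

lemma counit_left_delta_tree: "counit_left (delta_tree t :: 'k::comm_ring_1 HR2) = eb {#t#}"
proof (induction t)
  case (Node G)
  have "image_mset (\<lambda>t. counit_left (delta_tree t :: 'k HR2)) G = image_mset (\<lambda>t. eb {#t#}) G"
    using Node by (intro image_mset_cong) auto
  then have P: "counit_left (prod_mset (image_mset delta_tree G) :: 'k HR2) = eb G"
    by (simp add: rhom_prod_mset[OF rhom_counit_left] multiset.map_comp o_def prod_mset_eb_singletons)
  have "counit_left (eb ({#Node G#}, 0) :: 'k HR2) = 0"
    by (simp add: counit_left_def lin_ext_single[OF rhom_scalar])
  then show ?case
    by (simp add: rhom_add[OF rhom_counit_left] counit_left_id_tensor_Bplus P Bplus_def
        lin_ext_single[OF rhom_scalar] scalar_mult_eb)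
qed

lemma counit_left_Delta: "counit_left (Delta x) = x"
proof -
  have "counit_left (Delta x) = lin_ext scalar eb x"
    unfolding Delta_eq_lin_ext counit_left_lin_ext
    by (rule lin_ext_cong)
       (simp add: delta_forest_def rhom_prod_mset[OF rhom_counit_left] multiset.map_comp o_def
         counit_left_delta_tree prod_mset_eb_singletons)
  then show ?thesis by (simp add: lin_ext_eb)
qed

lemma HR_linear_add: "HR_linear B \<Longrightarrow> B (x + y) = B x + B y"
  by (simp add: HR_linear_def)

lemma HR_linear_scalar: "HR_linear B \<Longrightarrow> B (scalar c * x) = scalar c * B x"
  by (simp add: HR_linear_def pm_smult_scalar[symmetric])

lemma HR_linear_zero: "HR_linear B \<Longrightarrow> B 0 = 0"
  using HR_linear_add[of B 0 0] by simp

lemma id_tensor_eq_lin_ext: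
  "id_tensor B t = lin_ext scalar (\<lambda>ab. left_emb (eb (fst ab)) * right_emb (B (eb (snd ab)))) t"
  by (simp add: id_tensor_def lin_ext_def pm_smult_scalar tensor_eq_emb forest_basis_def)

lemma counit_left_id_tensor:
  assumes B: "HR_linear B"
  shows "counit_left (id_tensor B t) = B (counit_left t)"
proof -
  have "counit_left (id_tensor B t) = lin_ext scalar (B \<circ> (\<lambda>ab. if fst ab = 0 then eb (snd ab) else 0)) t"
    unfolding id_tensor_eq_lin_ext counit_left_lin_ext
    by (rule lin_ext_cong)
       (simp add: rhom_mult[OF rhom_counit_left] counit_left_left_emb counit_left_right_emb
         HR_linear_zero[OF B] scalar_def lookup_single counit_def)
  also have "\<dots> = B (counit_left t)"
    unfolding counit_left_def
    by (rule lin_ext_hom[symmetric]) (simp_all add: HR_linear_add[OF B] HR_linear_scalar[OF B])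
  finally show ?thesis .
qed

lemma counit_cocycle:
  assumes B: "one_cocycle B"
  shows "counit (B x) = 0"
proof -
  have lin: "HR_linear B" using B by (simp add: one_cocycle_def)
  have "counit_left (Delta (B x)) = counit_left (id_tensor B (Delta x)) + counit_left (tensor (B x) 1)"
    using B by (simp add: one_cocycle_def rhom_add[OF rhom_counit_left])
  then have "B x = B x + scalar (counit (B x))"
    by (simp add: counit_left_Delta counit_left_id_tensor[OF lin] tensor_eq_emb
        rhom_mult[OF rhom_counit_left] counit_left_left_emb counit_left_right_emb)
  then have "scalar (counit (B x)) = (0 :: 'a HR)" by simp
  then show ?thesis by (metis counit_scalar rhom_zero[OF rhom_scalar])
qed

lemma id_tensor_sum: "id_tensor B (sum g S) = (\<Sum>i\<in>S. id_tensor B (g i))"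
  by (simp add: id_tensor_eq_lin_ext lin_ext_sum[OF rhom_scalar])

lemma id_tensor_tensor:
  assumes B: "HR_linear B"
  shows "id_tensor B (left_emb x * right_emb y) = left_emb x * right_emb (B y)"
proof -
  have Lx: "left_emb x = (\<Sum>a\<in>Poly_Mapping.keys x. scalar (Poly_Mapping.lookup x a) * left_emb (eb a))"
    by (rule semilinear_expand)
       (simp_all add: rhom_add[OF rhom_left_emb] rhom_scalar_mult[OF rhom_left_emb left_emb_scalar])
  have Ry: "right_emb (B y) = (\<Sum>b\<in>Poly_Mapping.keys y. scalar (Poly_Mapping.lookup y b) * right_emb (B (eb b)))"
    by (rule semilinear_expand[where g="\<lambda>y. right_emb (B y)"])
       (simp_all add: HR_linear_add[OF B] HR_linear_scalar[OF B] rhom_add[OF rhom_right_emb]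
         rhom_scalar_mult[OF rhom_right_emb right_emb_scalar])
  show ?thesis
    unfolding id_tensor_eq_lin_ext lin_ext_tensor[OF rhom_scalar] unfolding Lx Ry sum_product
    by (simp add: algebra_simps)
qed

lemma lin_map_add: "lin_map iota a \<Longrightarrow> a (x + y) = a x + a y"
  by (simp add: lin_map_def)

lemma lin_map_scalar: "lin_map iota a \<Longrightarrow> a (scalar c * x) = iota c * a x"
  by (simp add: lin_map_def pm_smult_scalar[symmetric])

lemma lin_map_zero: "lin_map iota a \<Longrightarrow> a 0 = 0"
  using lin_map_add[of iota a 0 0] by simp

lemma lin_map_sum: "lin_map iota a \<Longrightarrow> a (sum g S) = (\<Sum>i\<in>S. a (g i))"
  by (induction S rule: infinite_finite_induct) (simp_all add: lin_map_zero lin_map_add)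

lemma conv_eq_lin_ext: "conv iota a b x = lin_ext iota (\<lambda>ab. a (eb (fst ab)) * b (eb (snd ab))) (Delta x)"
  by (simp add: conv_def lin_ext_def forest_basis_def mult.assoc)

lemma lin_ext_conv_tensor:
  assumes i: "rhom iota" and a: "lin_map iota a" and b: "lin_map iota b"
  shows "lin_ext iota (\<lambda>ab. a (eb (fst ab)) * b (eb (snd ab))) (left_emb x * right_emb y) = a x * b y"
proof -
  have ax: "a x = (\<Sum>u\<in>Poly_Mapping.keys x. iota (Poly_Mapping.lookup x u) * a (eb u))"
    by (rule semilinear_expand) (simp_all add: lin_map_add[OF a] lin_map_scalar[OF a])
  have bx: "b y = (\<Sum>u\<in>Poly_Mapping.keys y. iota (Poly_Mapping.lookup y u) * b (eb u))"
    by (rule semilinear_expand) (simp_all add: lin_map_add[OF b] lin_map_scalar[OF b])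
  show ?thesis
    unfolding lin_ext_tensor[OF i] ax bx sum_product by (simp add: algebra_simps)
qed

section \<open>The coproduct of the solution of the Dyson--Schwinger equation\<close>

lemma sum_triangle_swap:
  "(\<Sum>n\<in>{1..(N::nat)}. \<Sum>k\<in>{n..N}. f n k) = (\<Sum>k\<in>{1..N}. \<Sum>n\<in>{1..k}. (f n k :: 'a::comm_monoid_add))"
  by (induction N) (simp_all add: sum.distrib)

locale dse =
  fixes \<kappa> :: "'k::field_char_0"
    and B :: "nat \<Rightarrow> 'k HR \<Rightarrow> 'k HR"
    and X :: "'k HR fps"
  assumes cocycles: "\<And>n. n \<ge> 1 \<Longrightarrow> one_cocycle (B n)"
    and DSE: "\<And>N. fps_nth X N = (if N = 0 then 1 else 0)
                 + (\<Sum>n\<in>{1..N}. B n (fps_nth (fps_gpow HR_scalar (1 + of_nat n * \<kappa>) X) (N - n)))"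
begin

abbreviation P :: "'k \<Rightarrow> 'k HR fps" where "P p \<equiv> fps_gpow scalar p X"
abbreviation K :: "'k HR fps" where "K \<equiv> P \<kappa>"

abbreviation lser :: "'k HR fps \<Rightarrow> 'k HR2 fps" where "lser \<equiv> fps_comp left_emb"
abbreviation rser :: "'k HR fps \<Rightarrow> 'k HR2 fps" where "rser \<equiv> fps_comp right_emb"

text \<open>The substitution \<open>g \<mapsto> g (K \<otimes> 1)\<close> governing the coproduct of \<open>X\<close>.\<close>
definition gK :: "'k HR2 fps" where "gK = fps_X * lser K"

lemma gK_0: "gK $ 0 = 0"
  by (simp add: gK_def)

lemma DSE_scalar: "X $ N = (if N = 0 then 1 else 0) + (\<Sum>n\<in>{1..N}. B n (P (1 + of_nat n * \<kappa>) $ (N - n)))"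
  using DSE[of N] by (simp add: HR_scalar_eq_scalar)

lemma X_0: "X $ 0 = 1"
  using DSE_scalar[of 0] by simp

lemma P_one_plus: "P (1 + of_nat j * \<kappa>) = X * K ^ j"
  using gpow_add[OF rhom_scalar X_0, of 1 "of_nat j * \<kappa>"] gpow_of_nat_mult[OF rhom_scalar X_0, of j \<kappa>]
    gpow_one[OF rhom_scalar X_0] by simp

lemma tensor_series_nth:
  "(lser A * (rser C oo gK)) $ m = (\<Sum>k\<le>m. left_emb ((A * K ^ k) $ (m - k)) * right_emb (C $ k))"
proof -
  have "(lser A * (rser C oo gK)) $ m = (\<Sum>k\<le>m. right_emb (C $ k) * (lser A * gK ^ k) $ m)"
    by (simp add: fps_mult_compose_nth[OF gK_0])
  also have "\<dots> = (\<Sum>k\<le>m. left_emb ((A * K ^ k) $ (m - k)) * right_emb (C $ k))"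
  proof (rule sum.cong[OF refl])
    fix k assume "k \<in> {..m}"
    then have km: "k \<le> m" by simp
    have "lser A * gK ^ k = fps_X ^ k * lser (A * K ^ k)"
      by (simp add: gK_def fps_comp_mult[OF rhom_left_emb] fps_comp_power[OF rhom_left_emb]
          power_mult_distrib algebra_simps)
    then show "right_emb (C $ k) * (lser A * gK ^ k) $ m = left_emb ((A * K ^ k) $ (m - k)) * right_emb (C $ k)"
      using km by (simp add: fps_X_power_mult_nth mult.commute)
  qed
  finally show ?thesis .
qed

text \<open>If \<open>\<Delta> X = (X \<otimes> 1) \<cdot> ((1 \<otimes> X) \<circ> gK)\<close> holds below degree \<open>N\<close>, it holds there for every
  generalised power \<open>X\<^sup>p\<close>: \<open>\<Delta>\<close>, \<open>\<otimes> 1\<close>, \<open>1 \<otimes>\<close> and substitution all commute with \<open>(\<cdot>)\<^sup>p\<close>.\<close>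
lemma Delta_gpow_X:
  assumes H: "\<And>m. m < N \<Longrightarrow> Delta (X $ m) = (lser X * (rser X oo gK)) $ m"
    and mN: "m < N"
  shows "Delta (P p $ m) = (lser (P p) * (rser (P p) oo gK)) $ m"
proof -
  have LX0: "lser X $ 0 = 1" by (simp add: X_0 rhom_one[OF rhom_left_emb])
  have RX0: "rser X $ 0 = 1" by (simp add: X_0 rhom_one[OF rhom_right_emb])
  have "Delta (P p $ m) = fps_comp Delta (P p) $ m" by simp
  also have "\<dots> = fps_gpow scalar p (fps_comp Delta X) $ m"
    by (simp only: gpow_fps_comp[OF rhom_Delta Delta_scalar X_0])
  also have "\<dots> = fps_gpow scalar p (lser X * (rser X oo gK)) $ m"
    by (rule fps_causalD[OF fps_causal_gpow]) (use H mN in simp)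
  also have "fps_gpow scalar p (lser X * (rser X oo gK))
      = fps_gpow scalar p (lser X) * fps_gpow scalar p (rser X oo gK)"
    by (rule gpow_mult_base[OF rhom_scalar LX0]) (simp add: X_0 rhom_one[OF rhom_right_emb])
  also have "fps_gpow scalar p (lser X) = lser (P p)"
    by (rule gpow_fps_comp[OF rhom_left_emb left_emb_scalar X_0, symmetric])
  also have "fps_gpow scalar p (rser X oo gK) = rser (P p) oo gK"
    by (simp add: gpow_compose[OF RX0 gK_0] gpow_fps_comp[OF rhom_right_emb right_emb_scalar X_0])
  finally show ?thesis .
qed

lemma Delta_cocycle_term:
  assumes H: "\<And>m. m < N \<Longrightarrow> Delta (X $ m) = (lser X * (rser X oo gK)) $ m"
    and n: "1 \<le> n" "n \<le> N"
  defines "Q \<equiv> P (1 + of_nat n * \<kappa>)"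
  shows "Delta (B n (Q $ (N - n)))
       = (\<Sum>k\<in>{n..N}. left_emb ((X * K ^ k) $ (N - k)) * right_emb (B n (Q $ (k - n))))
         + left_emb (B n (Q $ (N - n)))"
proof -
  have cc: "one_cocycle (B n)" using n cocycles by simp
  then have lin: "HR_linear (B n)" by (simp add: one_cocycle_def)
  have D: "Delta (Q $ (N - n)) = (\<Sum>j\<le>N - n. left_emb ((Q * K ^ j) $ (N - n - j)) * right_emb (Q $ j))"
    using Delta_gpow_X[OF H, where m="N - n"] n by (simp add: Q_def tensor_series_nth)
  have "id_tensor (B n) (Delta (Q $ (N - n)))
      = (\<Sum>j\<le>N - n. left_emb ((Q * K ^ j) $ (N - n - j)) * right_emb (B n (Q $ j)))"
    unfolding D id_tensor_sum id_tensor_tensor[OF lin] ..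
  also have "\<dots> = (\<Sum>j\<le>N - n. left_emb ((X * K ^ (n + j)) $ (N - (n + j))) * right_emb (B n (Q $ (n + j - n))))"
    by (rule sum.cong[OF refl])
       (simp add: Q_def P_one_plus, simp add: power_add algebra_simps diff_diff_left)
  also have "\<dots> = (\<Sum>k\<in>{n..N}. left_emb ((X * K ^ k) $ (N - k)) * right_emb (B n (Q $ (k - n))))"
    using n by (intro sum.reindex_bij_witness[where i="\<lambda>k. k - n" and j="\<lambda>j. n + j"]) auto
  finally show ?thesis
    using cc by (simp add: one_cocycle_def tensor_eq_emb rhom_one[OF rhom_right_emb])
qed

text \<open>The coproduct of the solution: \<open>\<Delta> x\<^sub>N = \<Sum>\<^sub>k (X K\<^sup>k)\<^sub>N\<^sub>-\<^sub>k \<otimes> x\<^sub>k\<close>, by strong induction on \<open>N\<close>;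
  summing the previous lemma over \<open>n\<close> and exchanging the order of summation regroups the
  right factors into coefficients of \<open>X\<close>.\<close>
lemma Delta_X: "Delta (X $ N) = (lser X * (rser X oo gK)) $ N"
proof (induction N rule: less_induct)
  case (less N)
  show ?case
  proof (cases "N = 0")
    case True
    then show ?thesis
      by (simp add: X_0 rhom_one[OF rhom_Delta] rhom_one[OF rhom_left_emb] rhom_one[OF rhom_right_emb])
  next
    case False
    define Q where "Q n = P (1 + of_nat n * \<kappa>)" for n
    define f where "f n k = left_emb ((X * K ^ k) $ (N - k)) * right_emb (B n (Q n $ (k - n)))" for n k
    have XN: "X $ N = (\<Sum>n\<in>{1..N}. B n (Q n $ (N - n)))"
      using DSE_scalar[of N] False by (simp add: Q_def)
    have inner: "(\<Sum>n\<in>{1..k}. f n k) = left_emb ((X * K ^ k) $ (N - k)) * right_emb (X $ k)"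
      if "k \<in> {1..N}" for k
      using DSE_scalar[of k] that by (simp add: f_def Q_def sum_distrib_left rhom_sum[OF rhom_right_emb])
    have "Delta (X $ N) = (\<Sum>n\<in>{1..N}. (\<Sum>k\<in>{n..N}. f n k) + left_emb (B n (Q n $ (N - n))))"
      unfolding XN rhom_sum[OF rhom_Delta]
      by (rule sum.cong[OF refl]) (simp add: Delta_cocycle_term[OF less.IH] f_def Q_def)
    also have "\<dots> = (\<Sum>k\<in>{1..N}. \<Sum>n\<in>{1..k}. f n k) + left_emb (X $ N)"
      unfolding sum.distrib sum_triangle_swap XN rhom_sum[OF rhom_left_emb] ..
    also have "\<dots> = (\<Sum>k\<in>insert 0 {1..N}. left_emb ((X * K ^ k) $ (N - k)) * right_emb (X $ k))"
      using inner by (simp add: X_0 rhom_one[OF rhom_right_emb])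
    also have "insert 0 {1..N} = {..N}" by auto
    finally show ?thesis by (simp only: tensor_series_nth)
  qed
qed

lemma conv_X:
  fixes iota :: "'k \<Rightarrow> 'a::comm_ring_1" and a b :: "'k HR \<Rightarrow> 'a"
  assumes i: "rhom iota" and a: "lin_map iota a" and b: "lin_map iota b"
  shows "conv iota a b (X $ N) = (\<Sum>k\<le>N. a ((X * K ^ k) $ (N - k)) * b (X $ k))"
  by (simp add: conv_eq_lin_ext Delta_X tensor_series_nth lin_ext_sum[OF i] lin_ext_conv_tensor[OF i a b])

lemma counit_X: "i \<ge> 1 \<Longrightarrow> counit (X $ i) = 0"
  using DSE_scalar[of i] cocycles by (simp add: rhom_sum[OF rhom_counit] counit_cocycle)

end

section \<open>Evaluation against characters and infinitesimal characters\<close>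

lemma rhom_alg_struct: "alg_struct iota \<Longrightarrow> rhom iota"
  by (simp add: alg_struct_def rhom_def)

lemma rhom_character: "character iota f \<Longrightarrow> rhom f"
  by (simp add: character_def lin_map_def rhom_def)

lemma character_scalar: "character iota f \<Longrightarrow> f (scalar c) = iota c"
  using lin_map_scalar[of iota f c 1] by (simp add: character_def)

lemma inf_character_one:
  assumes i: "rhom iota" and \<psi>: "inf_character iota \<psi>"
  shows "\<psi> 1 = 0"
proof -
  have "\<psi> (1 * 1) = \<psi> 1 * iota (counit 1) + iota (counit 1) * \<psi> 1"
    using \<psi> unfolding inf_character_def by blast
  then show ?thesis by (simp add: rhom_one[OF rhom_counit] rhom_one[OF i])
qed

lemma inf_character_aug_mult:
  assumes i: "rhom iota" and \<psi>: "inf_character iota \<psi>"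
    and x: "counit x = 0" and y: "counit y = 0"
  shows "\<psi> (x * y) = 0"
  using \<psi> by (simp add: inf_character_def x y rhom_zero[OF i])

lemma fps_subst_sum_eq_compose: "fps_subst_sum c Z = Abs_fps c oo Z"
  by (simp add: fps_eq_iff fps_subst_sum_def fps_compose_nth atMost_atLeast0)

lemma mult_fps_subst_sum_X_nth:
  fixes A W :: "'a::comm_ring_1 fps"
  shows "(A * fps_subst_sum c (fps_X * W)) $ N = (\<Sum>k\<le>N. c k * (A * W ^ k) $ (N - k))"
proof -
  have "(A * fps_subst_sum c (fps_X * W)) $ N = (\<Sum>k\<le>N. c k * (A * (fps_X * W) ^ k) $ N)"
    by (simp add: fps_subst_sum_eq_compose fps_mult_compose_nth)
  also have "\<dots> = (\<Sum>k\<le>N. c k * (A * W ^ k) $ (N - k))"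
  proof (rule sum.cong[OF refl])
    fix k assume "k \<in> {..N}"
    moreover have "A * (fps_X * W) ^ k = fps_X ^ k * (A * W ^ k)"
      by (simp add: power_mult_distrib algebra_simps)
    ultimately show "c k * (A * (fps_X * W) ^ k) $ N = c k * (A * W ^ k) $ (N - k)"
      by (simp add: fps_X_power_mult_nth)
  qed
  finally show ?thesis .
qed

context dse
begin

text \<open>First formula: a character turns \<open>X K\<^sup>k\<close> into \<open>\<Psi>(X) \<Psi>(X)\<^sup>\<kappa>\<^sup>k\<close>.\<close>
lemma character_conv_X:
  fixes iota :: "'k \<Rightarrow> 'a::comm_ring_1" and \<Psi> lam :: "'k HR \<Rightarrow> 'a"
  assumes alg: "alg_struct iota" and char: "character iota \<Psi>" and lin: "lin_map iota lam"
  shows "fps_comp (conv iota \<Psi> lam) X =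
           fps_comp \<Psi> X * fps_subst_sum (\<lambda>n. lam (X $ n)) (fps_X * fps_gpow iota \<kappa> (fps_comp \<Psi> X))"
proof (rule fps_ext)
  fix N
  have i: "rhom iota" using alg by (rule rhom_alg_struct)
  have hom: "rhom \<Psi>" using char by (rule rhom_character)
  define W where "W = fps_gpow iota \<kappa> (fps_comp \<Psi> X)"
  have WK: "fps_comp \<Psi> (X * K ^ k) = fps_comp \<Psi> X * W ^ k" for k
    by (simp add: W_def fps_comp_mult[OF hom] fps_comp_power[OF hom]
        gpow_fps_comp[OF hom character_scalar[OF char] X_0])
  have "fps_comp (conv iota \<Psi> lam) X $ N = (\<Sum>k\<le>N. \<Psi> ((X * K ^ k) $ (N - k)) * lam (X $ k))"
    using char lin by (simp add: conv_X[OF i] character_def)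
  also have "\<dots> = (\<Sum>k\<le>N. lam (X $ k) * (fps_comp \<Psi> X * W ^ k) $ (N - k))"
    by (simp flip: WK add: mult.commute)
  also have "\<dots> = (fps_comp \<Psi> X * fps_subst_sum (\<lambda>n. lam (X $ n)) (fps_X * W)) $ N"
    by (simp add: mult_fps_subst_sum_X_nth)
  finally show "fps_comp (conv iota \<Psi> lam) X $ N =
      (fps_comp \<Psi> X * fps_subst_sum (\<lambda>n. lam (X $ n)) (fps_X * fps_gpow iota \<kappa> (fps_comp \<Psi> X))) $ N"
    by (simp add: W_def)
qed

lemma counit_X_minus_one_power:
  assumes "j \<ge> 1"
  shows "counit (((X - 1) ^ j) $ l) = 0"
proof -
  have "fps_comp counit (X - 1) = 0"
    by (simp add: fps_eq_iff counit_X rhom_diff[OF rhom_counit] rhom_one[OF rhom_counit]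
        rhom_zero[OF rhom_counit] X_0)
  then have "fps_comp counit ((X - 1) ^ j) = 0"
    using assms by (simp add: fps_comp_power[OF rhom_counit])
  then show ?thesis by (metis fps_comp_nth fps_zero_nth)
qed

lemma inf_character_X_minus_one_power:
  fixes iota :: "'k \<Rightarrow> 'a::comm_ring_1" and \<psi> :: "'k HR \<Rightarrow> 'a"
  assumes i: "rhom iota" and inf: "inf_character iota \<psi>" and k: "k \<ge> 2"
  shows "\<psi> (((X - 1) ^ k) $ m) = 0"
proof -
  have l: "lin_map iota \<psi>" using inf by (simp add: inf_character_def)
  obtain j where j: "k = Suc j" "j \<ge> 1" using k by (cases k) auto
  have "\<psi> (((X - 1) ^ k) $ m) = (\<Sum>i=0..m. \<psi> ((X - 1) $ i * ((X - 1) ^ j) $ (m - i)))"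
    by (simp add: j fps_mult_nth lin_map_sum[OF l])
  also have "\<dots> = 0"
    using counit_X_minus_one_power[of 1] counit_X_minus_one_power[OF j(2)]
    by (intro sum.neutral ballI inf_character_aug_mult[OF i inf]) simp_all
  finally show ?thesis .
qed

text \<open>An infinitesimal character only sees the linear term of the binomial series:
  \<open>\<psi>(X\<^sup>p) = p \<psi>(X)\<close>.\<close>
lemma inf_character_gpow_X:
  fixes iota :: "'k \<Rightarrow> 'a::comm_ring_1" and \<psi> :: "'k HR \<Rightarrow> 'a"
  assumes alg: "alg_struct iota" and inf: "inf_character iota \<psi>"
  shows "\<psi> (P p $ m) = iota p * \<psi> (X $ m)"
proof -
  have i: "rhom iota" using alg by (rule rhom_alg_struct)
  have l: "lin_map iota \<psi>" using inf by (simp add: inf_character_def)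
  have \<psi>1: "\<psi> 1 = 0" by (rule inf_character_one[OF i inf])
  have \<psi>0: "\<psi> 0 = 0" by (rule lin_map_zero[OF l])
  have binom_term: "iota (p gchoose k) * \<psi> (((X - 1) ^ k) $ m)
                    = (if k = 1 then iota p * \<psi> (X $ m) else 0)" for k
  proof -
    consider "k = 0" | "k = 1" | "k \<ge> 2" by linarith
    then show ?thesis
    proof cases
      case 1 then show ?thesis by (cases "m = 0") (simp_all add: \<psi>1 \<psi>0)
    next
      case 2
      have "\<psi> ((X - 1) $ m) = \<psi> (X $ m) - \<psi> ((1 :: 'k HR fps) $ m)"
        using lin_map_add[OF l, of "(X - 1) $ m" "(1 :: 'k HR fps) $ m"] by simp
      with 2 show ?thesis by (cases "m = 0") (simp_all add: \<psi>1 \<psi>0)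
    next
      case 3 then show ?thesis by (simp add: inf_character_X_minus_one_power[OF i inf])
    qed
  qed
  have "\<psi> (P p $ m) = (\<Sum>k\<le>m. iota (p gchoose k) * \<psi> (((X - 1) ^ k) $ m))"
    by (simp add: gpow_nth lin_map_sum[OF l] lin_map_scalar[OF l])
  also have "\<dots> = (\<Sum>k\<le>m. if k = 1 then iota p * \<psi> (X $ m) else 0)"
    by (simp only: binom_term)
  also have "\<dots> = iota p * \<psi> (X $ m)"
    by (cases "m = 0") (simp_all add: X_0 \<psi>1)
  finally show ?thesis .
qed

lemma nth_plus_X_deriv:
  "(F + fps_const c * fps_X * fps_deriv F) $ n = F $ n + c * of_nat n * (F $ n :: 'a::comm_ring_1)"
  by (cases n) (simp_all add: mult.assoc algebra_simps)

text \<open>Second formula: since \<open>\<psi>((X K\<^sup>k)\<^sub>j) = (1 + k\<kappa>) \<psi>(x\<^sub>j)\<close>, the convolution is the Cauchy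
  product of \<open>\<psi> \<circ> X\<close> with \<open>\<Sum>\<^sub>k (1 + \<kappa>k) \<lambda>(x\<^sub>k) g\<^sup>k = (1 + \<kappa> g \<partial>\<^sub>g) (\<lambda> \<circ> X)\<close>.\<close>
lemma inf_character_conv_X:
  fixes iota :: "'k \<Rightarrow> 'a::comm_ring_1" and \<psi> lam :: "'k HR \<Rightarrow> 'a"
  assumes alg: "alg_struct iota" and inf: "inf_character iota \<psi>" and lin: "lin_map iota lam"
  shows "fps_comp (conv iota \<psi> lam) X =
           fps_comp \<psi> X * (fps_comp lam X + fps_const (iota \<kappa>) * fps_X * fps_deriv (fps_comp lam X))"
proof (rule fps_ext)
  fix N
  have i: "rhom iota" using alg by (rule rhom_alg_struct)
  have l: "lin_map iota \<psi>" using inf by (simp add: inf_character_def)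
  have XK: "\<psi> ((X * K ^ k) $ j) = \<psi> (X $ j) * (1 + iota \<kappa> * of_nat k)" for k j
    using inf_character_gpow_X[OF alg inf, of "1 + of_nat k * \<kappa>" j] unfolding P_one_plus
    by (simp add: rhom_add[OF i] rhom_mult[OF i] rhom_one[OF i] rhom_of_nat[OF i] algebra_simps)
  have "fps_comp (conv iota \<psi> lam) X $ N = (\<Sum>k\<le>N. \<psi> ((X * K ^ k) $ (N - k)) * lam (X $ k))"
    by (simp add: conv_X[OF i l lin])
  also have "\<dots> = (\<Sum>i=0..N. \<psi> (X $ i) * (lam (X $ (N - i)) + iota \<kappa> * of_nat (N - i) * lam (X $ (N - i))))"
    unfolding XK
    by (subst sum.atLeastAtMost_rev) (auto simp: atMost_atLeast0 algebra_simps intro!: sum.cong)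
  also have "\<dots> = (fps_comp \<psi> X * (fps_comp lam X + fps_const (iota \<kappa>) * fps_X * fps_deriv (fps_comp lam X))) $ N"
    by (simp only: fps_mult_nth nth_plus_X_deriv fps_comp_nth)
  finally show "fps_comp (conv iota \<psi> lam) X $ N =
      (fps_comp \<psi> X * (fps_comp lam X + fps_const (iota \<kappa>) * fps_X * fps_deriv (fps_comp lam X))) $ N" .
qed

end

theorem mainTheorem12:
  fixes \<kappa> :: "'k::field_char_0"
    and B :: "nat \<Rightarrow> 'k HR \<Rightarrow> 'k HR"
    and X :: "'k HR fps"
    and iota :: "'k \<Rightarrow> 'a::comm_ring_1"
    and \<Psi> \<psi> lam :: "'k HR \<Rightarrow> 'a"
  assumes cocycles: "\<And>n. n \<ge> 1 \<Longrightarrow> one_cocycle (B n)"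
    and DSE: "\<And>N. fps_nth X N = (if N = 0 then 1 else 0)
                 + (\<Sum>n\<in>{1..N}. B n (fps_nth (fps_gpow HR_scalar (1 + of_nat n * \<kappa>) X) (N - n)))"
    and alg: "alg_struct iota"
    and char: "character iota \<Psi>"
    and infchar: "inf_character iota \<psi>"
    and lin: "lin_map iota lam"
  shows "fps_comp (conv iota \<Psi> lam) X =
           fps_comp \<Psi> X * fps_subst_sum (\<lambda>n. lam (fps_nth X n)) (fps_X * fps_gpow iota \<kappa> (fps_comp \<Psi> X))
       \<and> fps_comp (conv iota \<psi> lam) X =
           fps_comp \<psi> X * (fps_comp lam X + fps_const (iota \<kappa>) * fps_X * fps_deriv (fps_comp lam X))"
proof -
  interpret dse \<kappa> B X
    using cocycles DSE by unfold_locales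
  show ?thesis
    using character_conv_X[OF alg char lin] inf_character_conv_X[OF alg infchar lin] by simp
qed

end
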